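(* Let $n$ be a positive integer, let $\mathcal{K}$ be a finite subset of $\mathbb{Z}_+^n$ containing $\mathbf{0}=(0,\ldots,0)$, and let $(s_{\mathbf{k}})_{\mathbf{k}\in\mathcal{K}}$ be complex numbers. There exists a (non-negative) measure $\mu$ on the Borel $\sigma$-algebra $\mathfrak{B}(\mathbb{C}^n)$ such that $$\int_{\mathbb{C}^n} \mathbf{z}^{\mathbf{k}}\, d\mu(\mathbf{z}) = s_{\mathbf{k}}\qquad \text{for all } \mathbf{k}\in\mathcal{K}$$ if and only if one of the following conditions holds: (a) $s_{\mathbf{0}}>0$; (b) $s_{\mathbf{k}}=0$ for all $\mathbf{k}\in\mathcal{K}$. Moreover, if one of conditions (a), (b) is satisfied, then there exists such a measure $\mu$ with compact support.
   Context: $\mathbb{Z}_+$ denotes the set of non-negative integers. For $\mathbf{k}=(k_1,\ldots,k_n)\in\mathbb{Z}_+^n$ and $\mathbf{z}=(z_1,\ldots,z_n)\in\mathbb{C}^n$, $\mathbf{z}^{\mathbf{k}}$ denotes the monomial $z_1^{k_1}\cdots z_n^{k_n}$ (no complex conjugates appear). A measure here means a non-negative measure on the Borel sets of $\mathbb{C}^n$, with respect to which the monomials $\mathbf{z}^{\mathbf{k}}$, $\mathbf{k}\in\mathcal{K}$, are integrable. *)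

theory Defs
  imports "HOL-Analysis.Analysis"
begin

text \<open>Points of C^n are modelled as complex^'n (dimension n = CARD('n) \<ge> 1),
multi-indices in Z_+^n as nat^'n.\<close>

definition monomial :: "nat ^ 'n::finite \<Rightarrow> complex ^ 'n \<Rightarrow> complex" where
  "monomial k z = (\<Prod>i\<in>UNIV. (z $ i) ^ (k $ i))"

definition measure_support :: "(complex ^ 'n::finite) measure \<Rightarrow> (complex ^ 'n) set" where
  "measure_support \<mu> = {z. \<forall>e>0. emeasure \<mu> (ball z e) \<noteq> 0}"

definition solves_moments ::
  "(nat ^ 'n::finite) set \<Rightarrow> (nat ^ 'n \<Rightarrow> complex) \<Rightarrow> (complex ^ 'n) measure \<Rightarrow> bool" where
  "solves_moments K s \<mu> \<longleftrightarrow> sets \<mu> = sets borel \<and>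
     (\<forall>k\<in>K. integrable \<mu> (monomial k) \<and> integral\<^sup>L \<mu> (monomial k) = s k)"

end

theory Submission
  imports Defs
begin

text \<open>Necessity: the moment at \<open>0\<close> is the total mass, and a measure of total mass zero has
all moments zero. Sufficiency: finitely atomic measures suffice, and their moment sequences on \<open>K\<close>
form a convex cone. For \<open>k \<noteq> 0\<close>, \<open>\<beta> > 0\<close> and any \<open>c\<close>, put atoms at the points
\<open>(r \<omega>\<^bsup>g\<^sub>1\<^esup>, \<dots>, r \<omega>\<^bsup>g\<^sub>n\<^esup>)\<close>, \<open>\<omega> = e\<^bsup>2\<pi>i/N\<^esup>\<close>, \<open>g \<in> {0..N-1}\<^sup>n\<close>,
with weights proportional to \<open>1 + Re (v \<omega>\<^bsup>\<langle>k,g\<rangle>\<^esup>)\<close>. By orthogonality of the characters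
of \<open>(\<int>/N)\<^sup>n\<close>, the moments are \<open>\<beta>\<close> at \<open>0\<close>, \<open>c\<close> at \<open>k\<close> and \<open>0\<close> at every other \<open>j\<close>
with \<open>j + k < N\<close>, where \<open>r\<close> is taken large enough that the required \<open>v\<close> has \<open>|v| \<le> 1\<close>, which
keeps the weights nonnegative. Summing these over \<open>k \<in> K - {0}\<close> with \<open>c = s\<^sub>k\<close>, together with a
point mass at the origin, gives \<open>s\<close>.\<close>

lemma monomial_zero_exponent [simp]: "monomial 0 z = 1"
  by (simp add: monomial_def)

lemma monomial_at_zero: "monomial j (0 :: complex ^ 'n::finite) = (if j = 0 then 1 else 0)"
proof (cases "j = 0")
  case False
  then obtain i where "j $ i \<noteq> 0" by (auto simp: vec_eq_iff)
  then have "(\<Prod>i\<in>UNIV. (0::complex) ^ (j $ i)) = 0" by (intro prod_zero) auto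
  with False show ?thesis by (simp add: monomial_def)
qed simp

lemma borel_measurable_monomial [measurable]: "monomial k \<in> borel_measurable borel"
  unfolding monomial_def by (intro borel_measurable_continuous_onI continuous_intros)

definition atomic_moments :: "(nat ^ 'n::finite) set \<Rightarrow> (nat ^ 'n \<Rightarrow> complex) \<Rightarrow> bool" where
  "atomic_moments K s \<longleftrightarrow> (\<exists>S w. finite S \<and> (\<forall>z\<in>S. 0 \<le> w z) \<and>
     (\<forall>k\<in>K. (\<Sum>z\<in>S. of_real (w z) * monomial k z) = s k))"

lemma atomic_moments_compact_solution:
  fixes K :: "(nat ^ 'n::finite) set"
  assumes "atomic_moments K s"
  shows "\<exists>\<mu>. solves_moments K s \<mu> \<and> compact (measure_support \<mu>)"
proof -
  obtain S and w :: "complex ^ 'n \<Rightarrow> real" where S: "finite S" and w: "\<And>z. z \<in> S \<Longrightarrow> 0 \<le> w z"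
    and mom: "\<And>k. k \<in> K \<Longrightarrow> (\<Sum>z\<in>S. of_real (w z) * monomial k z) = s k"
    using assms unfolding atomic_moments_def by blast
  define M where "M = density (count_space S) (\<lambda>z. ennreal (w z))"
  define \<mu> where "\<mu> = distr M borel (\<lambda>z. z)"
  have meas: "(\<lambda>z. z) \<in> measurable M borel" unfolding M_def by simp
  have AE: "AE z in count_space S. 0 \<le> w z"
    using w by (simp add: AE_count_space)
  have "solves_moments K s \<mu>"
    unfolding solves_moments_def
  proof (intro conjI ballI)
    show "sets \<mu> = sets borel" unfolding \<mu>_def by simp
    fix k assume k: "k \<in> K"
    have "integrable M (monomial k)"
      unfolding M_def using S AE by (subst integrable_density) (auto intro: integrable_count_space)
    then show "integrable \<mu> (monomial k)"
      unfolding \<mu>_def using meas by (subst integrable_distr_eq) auto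
    have "integral\<^sup>L \<mu> (monomial k) = integral\<^sup>L M (monomial k)"
      unfolding \<mu>_def using meas by (subst integral_distr) auto
    also have "\<dots> = (\<Sum>z\<in>S. w z *\<^sub>R monomial k z)"
      unfolding M_def using S AE
      by (subst integral_density) (auto simp: lebesgue_integral_count_space_finite)
    also have "\<dots> = s k" using mom[OF k] by (simp add: scaleR_conv_of_real)
    finally show "integral\<^sup>L \<mu> (monomial k) = s k" .
  qed
  moreover have "measure_support \<mu> \<subseteq> S"
  proof
    fix z assume z: "z \<in> measure_support \<mu>"
    show "z \<in> S"
    proof (rule ccontr)
      assume "z \<notin> S"
      moreover have "open (- S)" using S by (simp add: finite_imp_closed open_Compl)
      ultimately obtain e where e: "e > 0" "ball z e \<subseteq> - S"
        by (meson ComplI open_contains_ball)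
      have "emeasure \<mu> (ball z e) = emeasure M (ball z e \<inter> S)"
        unfolding \<mu>_def using meas by (subst emeasure_distr) (auto simp: M_def Int_commute)
      also have "ball z e \<inter> S = {}" using e(2) by blast
      finally have "emeasure \<mu> (ball z e) = 0" by simp
      then show False using z e(1) unfolding measure_support_def by auto
    qed
  qed
  then have "compact (measure_support \<mu>)"
    using S by (meson finite_imp_compact finite_subset)
  ultimately show ?thesis by blast
qed

lemma atomic_momentsI:
  fixes K :: "(nat ^ 'n::finite) set" and p :: "'i \<Rightarrow> complex ^ 'n"
  assumes "finite I" and "\<And>i. i \<in> I \<Longrightarrow> 0 \<le> w i"
    and "\<And>k. k \<in> K \<Longrightarrow> (\<Sum>i\<in>I. of_real (w i) * monomial k (p i)) = s k"
  shows "atomic_moments K s"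
  unfolding atomic_moments_def
proof (intro exI conjI ballI)
  define u where "u z = (\<Sum>i\<in>{i\<in>I. p i = z}. w i)" for z
  show "finite (p ` I)" using assms(1) by simp
  show "0 \<le> u z" for z unfolding u_def using assms(2) by (intro sum_nonneg) auto
  fix k assume "k \<in> K"
  have "(\<Sum>z\<in>p ` I. of_real (u z) * monomial k z) = (\<Sum>i\<in>I. of_real (w i) * monomial k (p i))"
    unfolding u_def using assms(1)
    by (subst sum.image_gen[of I "\<lambda>i. of_real (w i) * monomial k (p i)" p])
       (auto intro!: sum.cong simp: sum_distrib_right)
  then show "(\<Sum>z\<in>p ` I. of_real (u z) * monomial k z) = s k"
    using assms(3)[OF \<open>k \<in> K\<close>] by simp
qed

lemma atomic_moments_point_mass:
  assumes "0 \<le> c"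
  shows "atomic_moments K (\<lambda>k. of_real c * monomial k z)"
  using assms by (intro atomic_momentsI[of "{()}" "\<lambda>_. c" K "\<lambda>_. z"]) auto

lemma atomic_moments_zero: "atomic_moments K (\<lambda>k. 0)"
  unfolding atomic_moments_def by (intro exI[of _ "{}"]) auto

lemma atomic_moments_add:
  fixes K :: "(nat ^ 'n::finite) set"
  assumes "atomic_moments K s" and "atomic_moments K t"
  shows "atomic_moments K (\<lambda>k. s k + t k)"
proof -
  obtain S and w :: "complex ^ 'n \<Rightarrow> real" where S: "finite S" "\<And>z. z \<in> S \<Longrightarrow> 0 \<le> w z"
    "\<And>k. k \<in> K \<Longrightarrow> (\<Sum>z\<in>S. of_real (w z) * monomial k z) = s k"
    using assms(1) unfolding atomic_moments_def by blast
  obtain T and v :: "complex ^ 'n \<Rightarrow> real" where T: "finite T" "\<And>z. z \<in> T \<Longrightarrow> 0 \<le> v z"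
    "\<And>k. k \<in> K \<Longrightarrow> (\<Sum>z\<in>T. of_real (v z) * monomial k z) = t k"
    using assms(2) unfolding atomic_moments_def by blast
  show ?thesis
  proof (rule atomic_momentsI[of "S <+> T" "case_sum w v" K "case_sum (\<lambda>z. z) (\<lambda>z. z)"])
    fix k assume "k \<in> K"
    then show "(\<Sum>i\<in>S <+> T. of_real (case_sum w v i) * monomial k (case_sum (\<lambda>z. z) (\<lambda>z. z) i))
        = s k + t k"
      using S T by (simp add: sum.Plus)
  qed (use S T in auto)
qed

lemma atomic_moments_sum:
  assumes "finite A" and "\<And>a. a \<in> A \<Longrightarrow> atomic_moments K (f a)"
  shows "atomic_moments K (\<lambda>k. \<Sum>a\<in>A. f a k)"
  using assms by (induction A rule: finite_induct) (auto intro: atomic_moments_zero atomic_moments_add)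

lemma atomic_moments_mono:
  assumes "atomic_moments L s" and "K \<subseteq> L"
  shows "atomic_moments K s"
  using assms unfolding atomic_moments_def by blast

lemma atomic_moments_cong:
  assumes "atomic_moments K s" and "\<And>k. k \<in> K \<Longrightarrow> s k = t k"
  shows "atomic_moments K t"
  using assms unfolding atomic_moments_def by metis

lemma cis_eq_1_iff: "cis x = 1 \<longleftrightarrow> (\<exists>m::int. x = 2 * pi * of_int m)"
proof
  assume "cis x = 1"
  then have "cos x = 1" by (simp add: complex_eq_iff)
  then show "\<exists>m::int. x = 2 * pi * of_int m"
    by (auto simp: cos_one_2pi_int mult.commute)
qed auto

lemma cis_root_of_unity_eq_1_iff:
  assumes "N > 0"
  shows "cis (2 * pi * of_int a / of_nat N) = 1 \<longleftrightarrow> int N dvd a"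
proof -
  have "2 * pi * of_int a / of_nat N = 2 * pi * of_int m \<longleftrightarrow> a = int N * m" for m :: int
  proof -
    have "2 * pi * of_int a / of_nat N = 2 * pi * of_int m \<longleftrightarrow> real_of_int a = of_nat N * of_int m"
      using assms by (auto simp: field_simps)
    also have "\<dots> \<longleftrightarrow> a = int N * m"
      by (metis of_int_eq_iff of_int_mult of_int_of_nat_eq)
    finally show ?thesis .
  qed
  then show ?thesis by (auto simp: cis_eq_1_iff dvd_def)
qed

lemma cis_sum: "cis (\<Sum>i\<in>A. f i) = (\<Prod>i\<in>A. cis (f i))"
  by (induction A rule: infinite_finite_induct) (auto simp: cis_mult[symmetric])

lemma sum_powers_root_of_unity:
  fixes c :: complex
  assumes "c ^ N = 1" and "N > 0"
  shows "(\<Sum>b<N. c ^ b) = (if c = 1 then of_nat N else 0)"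
  using assms by (simp add: sum_gp_strict)

definition torus_char :: "nat \<Rightarrow> ('n \<Rightarrow> int) \<Rightarrow> ('n::finite \<Rightarrow> nat) \<Rightarrow> complex" where
  "torus_char N a g = cis (2 * pi * of_int (\<Sum>i\<in>UNIV. a i * int (g i)) / of_nat N)"

lemma torus_char_mult:
  "torus_char N a g * torus_char N b g = torus_char N (\<lambda>i. a i + b i) g"
  unfolding torus_char_def by (simp add: cis_mult sum.distrib algebra_simps add_divide_distrib)

lemma cnj_torus_char: "cnj (torus_char N a g) = torus_char N (\<lambda>i. - a i) g"
  unfolding torus_char_def by (simp add: cis_cnj sum_negf)

lemma norm_torus_char [simp]: "norm (torus_char N a g) = 1"
  by (simp add: torus_char_def)

lemma torus_char_eq_prod:
  "torus_char N a g = (\<Prod>i\<in>UNIV. cis (2 * pi * of_int (a i) / of_nat N) ^ g i)"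
proof -
  have "2 * pi * of_int (\<Sum>i\<in>UNIV. a i * int (g i)) / of_nat N
      = (\<Sum>i\<in>UNIV. real (g i) * (2 * pi * of_int (a i) / of_nat N))"
    by (simp add: sum_distrib_left sum_divide_distrib algebra_simps)
  \<comment> \<open>HOL-Analysis shadows \<open>DeMoivre\<close> by a version for \<open>cos z + i sin z\<close>, hence the qualified name.\<close>
  then show ?thesis by (simp add: torus_char_def cis_sum Complex.DeMoivre)
qed

lemma sum_torus_char:
  fixes a :: "'n::finite \<Rightarrow> int"
  assumes "N > 0"
  shows "(\<Sum>g\<in>UNIV \<rightarrow>\<^sub>E {..<N}. torus_char N a g)
       = (if \<forall>i. int N dvd a i then of_nat N ^ CARD('n) else 0)"
proof -
  define c where "c i = cis (2 * pi * of_int (a i) / of_nat N)" for i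
  have c_pow: "c i ^ N = 1" for i
  proof -
    have "c i ^ N = cis (2 * pi * of_int (a i))"
      unfolding c_def Complex.DeMoivre using assms by (simp add: field_simps)
    then show ?thesis by simp
  qed
  have "(\<Sum>g\<in>UNIV \<rightarrow>\<^sub>E {..<N}. torus_char N a g) = (\<Sum>g\<in>UNIV \<rightarrow>\<^sub>E {..<N}. \<Prod>i\<in>UNIV. c i ^ g i)"
    unfolding torus_char_eq_prod c_def ..
  also have "\<dots> = (\<Prod>i\<in>UNIV. \<Sum>b<N. c i ^ b)"
    by (rule prod_sum_PiE[symmetric]) auto
  also have "\<dots> = (\<Prod>i\<in>UNIV. if int N dvd a i then of_nat N else 0)"
    using sum_powers_root_of_unity[OF c_pow assms] cis_root_of_unity_eq_1_iff[OF assms]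
    by (simp add: c_def)
  also have "\<dots> = (if \<forall>i. int N dvd a i then of_nat N ^ CARD('n) else 0)"
    by (auto simp: prod_constant)
  finally show ?thesis .
qed

lemma sum_torus_char_small:
  fixes a :: "'n::finite \<Rightarrow> int"
  assumes "\<And>i. \<bar>a i\<bar> < int N"
  shows "(\<Sum>g\<in>UNIV \<rightarrow>\<^sub>E {..<N}. torus_char N a g)
       = (if a = (\<lambda>_. 0) then of_nat N ^ CARD('n) else 0)"
proof -
  have "N > 0" using assms[of undefined] by simp
  moreover have "int N dvd a i \<longleftrightarrow> a i = 0" for i
    using assms[of i] dvd_imp_le_int[of "a i" "int N"] by auto
  ultimately show ?thesis using sum_torus_char[of N a] by (simp add: fun_eq_iff)
qed

definition torus_point :: "nat \<Rightarrow> real \<Rightarrow> ('n::finite \<Rightarrow> nat) \<Rightarrow> complex ^ 'n" where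
  "torus_point N r g = (\<chi> i. of_real r * cis (2 * pi * of_nat (g i) / of_nat N))"

lemma monomial_torus_point:
  "monomial j (torus_point N r g) = of_real r ^ (\<Sum>i\<in>UNIV. j $ i) * torus_char N (\<lambda>i. int (j $ i)) g"
proof -
  have "cis (2 * pi * of_nat (g i) / of_nat N) ^ (j $ i)
      = cis (2 * pi * of_int (int (j $ i)) / of_nat N) ^ g i" for i
    unfolding Complex.DeMoivre by (simp add: algebra_simps)
  then show ?thesis
    unfolding monomial_def torus_point_def torus_char_eq_prod
    by (simp add: power_mult_distrib prod.distrib power_sum)
qed

lemma sum_torus_density_char:
  fixes j k :: "nat ^ 'n::finite"
  assumes jk: "\<And>i. j $ i + k $ i < N" and k: "k \<noteq> 0"
  shows "(\<Sum>g\<in>UNIV \<rightarrow>\<^sub>E {..<N}. of_real (1 + Re (v * torus_char N (\<lambda>i. int (k $ i)) g))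
            * torus_char N (\<lambda>i. int (j $ i)) g)
       = of_nat N ^ CARD('n) * ((if j = 0 then 1 else 0) + (if j = k then cnj v / 2 else 0))"
proof -
  define G :: "('n \<Rightarrow> nat) set" where "G = UNIV \<rightarrow>\<^sub>E {..<N}"
  define e :: "('n \<Rightarrow> int) \<Rightarrow> ('n \<Rightarrow> nat) \<Rightarrow> complex" where "e = torus_char N"
  let ?j = "\<lambda>i. int (j $ i)" and ?k = "\<lambda>i. int (k $ i)"
  have expand: "of_real (1 + Re (v * e ?k g)) * e ?j g
      = e ?j g + v / 2 * e (\<lambda>i. ?k i + ?j i) g + cnj v / 2 * e (\<lambda>i. - ?k i + ?j i) g" for g
  proof -
    have "of_real (1 + Re z) * x = x + z * x / 2 + cnj z * x / 2" for z x :: complex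
    proof -
      have "of_real (Re z) = (z + cnj z) / 2" by (simp add: complex_add_cnj)
      then show ?thesis by (simp add: algebra_simps add_divide_distrib)
    qed
    from this[of "v * e ?k g" "e ?j g"] show ?thesis
      unfolding e_def complex_cnj_mult cnj_torus_char torus_char_mult[symmetric]
      by (simp add: algebra_simps)
  qed
  have "(\<Sum>g\<in>G. e ?j g) = (if j = 0 then of_nat N ^ CARD('n) else 0)"
  proof -
    have "\<bar>?j i\<bar> < int N" for i using jk[of i] by linarith
    moreover have "?j = (\<lambda>_. 0) \<longleftrightarrow> j = 0" by (auto simp: fun_eq_iff vec_eq_iff)
    ultimately show ?thesis unfolding G_def e_def by (simp add: sum_torus_char_small)
  qed
  moreover have "(\<Sum>g\<in>G. e (\<lambda>i. ?k i + ?j i) g) = 0"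
  proof -
    have "\<bar>?k i + ?j i\<bar> < int N" for i using jk[of i] by linarith
    moreover have "(\<lambda>i. ?k i + ?j i) \<noteq> (\<lambda>_. 0)"
    proof
      assume "(\<lambda>i. ?k i + ?j i) = (\<lambda>_. 0)"
      then have "k $ i = 0" for i by (metis add_nonneg_eq_0_iff of_nat_0_le_iff of_nat_eq_0_iff)
      with k show False by (simp add: vec_eq_iff)
    qed
    ultimately show ?thesis unfolding G_def e_def by (simp add: sum_torus_char_small)
  qed
  moreover have "(\<Sum>g\<in>G. e (\<lambda>i. - ?k i + ?j i) g) = (if j = k then of_nat N ^ CARD('n) else 0)"
  proof -
    have "\<bar>- ?k i + ?j i\<bar> < int N" for i using jk[of i] by linarith
    moreover have "(\<lambda>i. - ?k i + ?j i) = (\<lambda>_. 0) \<longleftrightarrow> j = k" by (auto simp: fun_eq_iff vec_eq_iff)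
    ultimately show ?thesis unfolding G_def e_def by (simp add: sum_torus_char_small)
  qed
  ultimately show ?thesis
    unfolding G_def[symmetric] e_def[symmetric] expand sum.distrib sum_distrib_left[symmetric]
    by (simp add: algebra_simps)
qed

lemma le_power_sum_vec:
  fixes k :: "nat ^ 'n::finite" and r :: real
  assumes "k \<noteq> 0" and "1 \<le> r"
  shows "r \<le> r ^ (\<Sum>i\<in>UNIV. k $ i)"
proof -
  obtain i where "k $ i \<noteq> 0" using assms(1) by (auto simp: vec_eq_iff)
  then have "1 \<le> (\<Sum>i\<in>UNIV. k $ i)"
    using member_le_sum[of i UNIV "\<lambda>i. k $ i"] by simp
  then show ?thesis using power_increasing[OF _ assms(2)] by fastforce
qed

lemma atomic_moments_torus:
  fixes k :: "nat ^ 'n::finite"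
  assumes k: "k \<noteq> 0" and \<beta>: "\<beta> > 0"
  shows "atomic_moments {j. \<forall>i. j $ i + k $ i < N}
           (\<lambda>j. (if j = 0 then of_real \<beta> else 0) + (if j = k then c else 0))"
proof -
  define r where "r = 1 + 2 * norm c / \<beta>"
  define \<rho> where "\<rho> = r ^ (\<Sum>i\<in>UNIV. k $ i)"
  define v where "v = cnj (2 * c / of_real (\<beta> * \<rho>))"
  define w where "w g = \<beta> / N ^ CARD('n) * (1 + Re (v * torus_char N (\<lambda>i. int (k $ i)) g))" for g
  have r: "1 \<le> r" unfolding r_def using \<beta> by simp
  have \<rho>: "r \<le> \<rho>" unfolding \<rho>_def using le_power_sum_vec[OF k r] .
  have "norm v = 2 * norm c / (\<beta> * \<rho>)"
    unfolding v_def using \<beta> r \<rho> by (simp add: norm_divide norm_mult)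
  also have "\<dots> \<le> 2 * norm c / (\<beta> * r)"
    using \<beta> r \<rho> by (intro divide_left_mono mult_left_mono) auto
  also have "\<dots> \<le> 1"
  proof -
    have "2 * norm c \<le> \<beta> * r" unfolding r_def using \<beta> by (simp add: field_simps)
    then show ?thesis using \<beta> r by (simp add: pos_divide_le_eq)
  qed
  finally have v: "norm v \<le> 1" .
  show ?thesis
  proof (rule atomic_momentsI[of "UNIV \<rightarrow>\<^sub>E {..<N}" w _ "torus_point N r"])
    fix g
    have "norm (v * torus_char N (\<lambda>i. int (k $ i)) g) \<le> 1" using v by (simp add: norm_mult)
    then have "0 \<le> 1 + Re (v * torus_char N (\<lambda>i. int (k $ i)) g)"
      using abs_Re_le_cmod[of "v * torus_char N (\<lambda>i. int (k $ i)) g"] by linarith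
    then show "0 \<le> w g" unfolding w_def using \<beta> by simp
  next
    fix j assume "j \<in> {j. \<forall>i. j $ i + k $ i < N}"
    then have jk: "\<And>i. j $ i + k $ i < N" by simp
    then have "N > 0" by (metis gr_zeroI not_less_zero)
    have "(\<Sum>g\<in>UNIV \<rightarrow>\<^sub>E {..<N}. of_real (w g) * monomial j (torus_point N r g))
        = of_real \<beta> / of_nat N ^ CARD('n) * of_real r ^ (\<Sum>i\<in>UNIV. j $ i)
          * (\<Sum>g\<in>UNIV \<rightarrow>\<^sub>E {..<N}. of_real (1 + Re (v * torus_char N (\<lambda>i. int (k $ i)) g))
              * torus_char N (\<lambda>i. int (j $ i)) g)"
      unfolding monomial_torus_point w_def sum_distrib_left by (intro sum.cong) simp_all
    also have "\<dots> = of_real \<beta> * of_real r ^ (\<Sum>i\<in>UNIV. j $ i)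
          * ((if j = 0 then 1 else 0) + (if j = k then cnj v / 2 else 0))"
      unfolding sum_torus_density_char[OF jk k] using \<open>N > 0\<close> by simp
    also have "\<dots> = (if j = 0 then of_real \<beta> else 0) + (if j = k then c else 0)"
      using k \<beta> r \<rho> by (auto simp: v_def \<rho>_def)
    finally show "(\<Sum>g\<in>UNIV \<rightarrow>\<^sub>E {..<N}. of_real (w g) * monomial j (torus_point N r g))
        = (if j = 0 then of_real \<beta> else 0) + (if j = k then c else 0)" .
  qed (simp add: finite_PiE)
qed

lemma atomic_moments_if_positive_mass:
  fixes K :: "(nat ^ 'n::finite) set"
  assumes K: "finite K" and s0: "s 0 = of_real \<sigma>" and \<sigma>: "\<sigma> > 0"
  shows "atomic_moments K s"
proof -
  obtain D where D: "\<And>k i. k \<in> K \<Longrightarrow> k $ i < D"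
  proof -
    have "finite ((\<lambda>(k, i). k $ i) ` (K \<times> UNIV))" using K by simp
    then show ?thesis using that by (auto simp: finite_nat_set_iff_bounded)
  qed
  define K' where "K' = K - {0}"
  \<comment> \<open>The origin and each of the \<open>card K'\<close> torus atoms contribute \<open>\<beta>\<close> to the total mass.\<close>
  define \<beta> where "\<beta> = \<sigma> / (card K' + 1)"
  have \<beta>: "\<beta> > 0" unfolding \<beta>_def using \<sigma> by simp
  have "atomic_moments K (\<lambda>j. of_real \<beta> * monomial j 0)"
    using \<beta> by (intro atomic_moments_point_mass) simp
  moreover have "atomic_moments K (\<lambda>j. \<Sum>k\<in>K'. (if j = 0 then of_real \<beta> else 0) + (if j = k then s k else 0))"
  proof (rule atomic_moments_sum)
    show "finite K'" using K unfolding K'_def by simp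
    fix k assume "k \<in> K'"
    then have "k \<noteq> 0" and "k \<in> K" unfolding K'_def by auto
    have "j $ i + k $ i < 2 * D" if "j \<in> K" for j i
      using D[OF that, of i] D[OF \<open>k \<in> K\<close>, of i] by linarith
    then have "K \<subseteq> {j. \<forall>i. j $ i + k $ i < 2 * D}" by blast
    with atomic_moments_torus[OF \<open>k \<noteq> 0\<close> \<beta>]
    show "atomic_moments K (\<lambda>j. (if j = 0 then of_real \<beta> else 0) + (if j = k then s k else 0))"
      by (rule atomic_moments_mono)
  qed
  ultimately have "atomic_moments K (\<lambda>j. of_real \<beta> * monomial j 0
      + (\<Sum>k\<in>K'. (if j = 0 then of_real \<beta> else 0) + (if j = k then s k else 0)))"
    by (rule atomic_moments_add)
  then show ?thesis
  proof (rule atomic_moments_cong)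
    fix j assume "j \<in> K"
    show "of_real \<beta> * monomial j 0 + (\<Sum>k\<in>K'. (if j = 0 then of_real \<beta> else 0) + (if j = k then s k else 0))
        = s j"
    proof (cases "j = 0")
      case True
      have "0 \<notin> K'" unfolding K'_def by simp
      then have "(\<Sum>k\<in>K'. (if j = 0 then of_real \<beta> else 0) + (if j = k then s k else 0))
          = (\<Sum>k\<in>K'. of_real \<beta>)"
        using True by (intro sum.cong) auto
      then have "of_real \<beta> * monomial j 0 + (\<Sum>k\<in>K'. (if j = 0 then of_real \<beta> else 0) + (if j = k then s k else 0))
          = of_real (\<beta> * (card K' + 1))"
        using True by (simp add: monomial_at_zero algebra_simps)
      also have "\<dots> = s j" using True s0 by (simp add: \<beta>_def)
      finally show ?thesis .
    next
      case False
      with \<open>j \<in> K\<close> have "j \<in> K'" unfolding K'_def by simp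
      with False K show ?thesis by (simp add: monomial_at_zero K'_def)
    qed
  qed
qed

lemma solves_moments_imp_positive_or_trivial:
  fixes K :: "(nat ^ 'n::finite) set"
  assumes "0 \<in> K" and sol: "solves_moments K s \<mu>"
  shows "(s 0 \<in> \<real> \<and> Re (s 0) > 0) \<or> (\<forall>k\<in>K. s k = 0)"
proof -
  have "monomial (0 :: nat ^ 'n) = (\<lambda>_. 1)" by (simp add: fun_eq_iff)
  then have int1: "integrable \<mu> (\<lambda>_. 1 :: complex)" and s0: "s 0 = of_real (measure \<mu> (space \<mu>))"
    using assms unfolding solves_moments_def by (auto simp: scaleR_conv_of_real)
  show ?thesis
  proof (cases "measure \<mu> (space \<mu>) = 0")
    case False
    with measure_nonneg[of \<mu> "space \<mu>"] have "measure \<mu> (space \<mu>) > 0" by linarith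
    then show ?thesis by (simp add: s0)
  next
    case True
    have "emeasure \<mu> (space \<mu>) < \<infinity>"
      using int1 unfolding integrable_iff_bounded by (simp add: nn_integral_const)
    with True have "emeasure \<mu> (space \<mu>) = 0"
      using emeasure_eq_ennreal_measure[of \<mu> "space \<mu>"] by (simp add: less_top)
    then have "space \<mu> \<in> null_sets \<mu>" by (auto intro: null_setsI)
    then have "integral\<^sup>L \<mu> (monomial k) = 0" for k
      by (intro integral_eq_zero_AE AE_I') auto
    then show ?thesis using sol unfolding solves_moments_def by auto
  qed
qed

theorem theorem2p1:
  fixes K :: "(nat ^ 'n::finite) set" and s :: "nat ^ 'n \<Rightarrow> complex"
  assumes "finite K" and "0 \<in> K"
  shows "((\<exists>\<mu>. solves_moments K s \<mu>) \<longleftrightarrow>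
           ((s 0 \<in> \<real> \<and> Re (s 0) > 0) \<or> (\<forall>k\<in>K. s k = 0)))
       \<and> (((s 0 \<in> \<real> \<and> Re (s 0) > 0) \<or> (\<forall>k\<in>K. s k = 0)) \<longrightarrow>
           (\<exists>\<mu>. solves_moments K s \<mu> \<and> compact (measure_support \<mu>)))"
proof -
  have compact_solution: "\<exists>\<mu>. solves_moments K s \<mu> \<and> compact (measure_support \<mu>)"
    if "(s 0 \<in> \<real> \<and> Re (s 0) > 0) \<or> (\<forall>k\<in>K. s k = 0)"
  proof -
    have "atomic_moments K s"
      using that
    proof
      assume "s 0 \<in> \<real> \<and> Re (s 0) > 0"
      then show ?thesis
        using atomic_moments_if_positive_mass[OF \<open>finite K\<close>, of s "Re (s 0)"]
        by (simp add: complex_is_Real_iff complex_eq_iff)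
    next
      assume "\<forall>k\<in>K. s k = 0"
      then show ?thesis using atomic_moments_zero atomic_moments_cong by metis
    qed
    then show ?thesis by (rule atomic_moments_compact_solution)
  qed
  show ?thesis
    using compact_solution solves_moments_imp_positive_or_trivial[OF \<open>0 \<in> K\<close>] by blast
qed

end
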